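(* Let $k\geq 3$ and consider the single braided Coxeter group $W^3_k$ with generators $s_1,s_2,s_3$. For all $\lambda\in\mathbb{N}_0$ and $1\le r\le 3$, \[ l_R(\omega((s_1s_2s_3)^\lambda s_1\cdots s_r))\leq \lambda+r-2\left\lfloor\frac{\lambda+\mathbf{1}_{r\geq2}}{k}\right\rfloor. \]
   Context: $W^n_k=\langle s_1,\dots,s_n\mid s_i^2=(s_is_j)^{k}=1\ \forall i\neq j\rangle$. $\omega$ maps a word over $\{s_1,\dots,s_n\}$ to the element it represents. $l_R$ is the reflection length: minimal number of reflections (conjugates of generators) whose product is the element. $\mathbf{1}_{r\ge2}$ is $1$ if $r\ge2$ and $0$ otherwise; $s_1\cdots s_r$ denotes the product of the first $r$ generators. *)

theory Defs
  imports Main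
begin

definition relators :: "nat \<Rightarrow> nat \<Rightarrow> nat list set" where
  "relators n k =
     {[i, i] | i. i \<in> {1..n}} \<union>
     {concat (replicate k [i, j]) | i j. i \<in> {1..n} \<and> j \<in> {1..n} \<and> i \<noteq> j}"

definition is_word :: "nat \<Rightarrow> nat list \<Rightarrow> bool" where
  "is_word n w \<longleftrightarrow> set w \<subseteq> {1..n}"

text \<open>Two words represent the same element of W^n_k (omega u = omega v) iff they are related
  by the congruence generated by the relators.\<close>
inductive coxeq :: "nat \<Rightarrow> nat \<Rightarrow> nat list \<Rightarrow> nat list \<Rightarrow> bool" for n k where
  refl: "coxeq n k w w"
| sym: "coxeq n k u v \<Longrightarrow> coxeq n k v u"
| trans: "coxeq n k u v \<Longrightarrow> coxeq n k v w \<Longrightarrow> coxeq n k u w"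
| rel: "r \<in> relators n k \<Longrightarrow> coxeq n k (u @ r @ v) (u @ v)"

text \<open>Reflections: conjugates w s_i w^{-1} of generators; since generators are involutions,
  w^{-1} is represented by rev w.\<close>
definition refl_word :: "nat \<Rightarrow> nat list \<Rightarrow> bool" where
  "refl_word n t \<longleftrightarrow> (\<exists>w i. is_word n w \<and> i \<in> {1..n} \<and> t = w @ [i] @ rev w)"

definition lR :: "nat \<Rightarrow> nat \<Rightarrow> nat list \<Rightarrow> nat" where
  "lR n k w = (LEAST m. \<exists>ts. length ts = m \<and> (\<forall>t\<in>set ts. refl_word n t)
                              \<and> coxeq n k (concat ts) w)"

end

theory Submission
  imports Defs
begin

(* Deleting a letter from a word costs one reflection, since u s v = (u s u^-1) u v.
   In (s1 s2 s3)^lam s1 s2 delete the letters s3 one by one until a block (s1 s2)^k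
   appears, which is trivial: a block of k consecutive periods costs only k - 2
   reflections (after inserting s3 s3 to glue it to its neighbour) instead of k single
   deletions. Cyclically renaming s1 -> s2 -> s3 handles the incomplete last block, so
   every full block of k periods saves two reflections. *)

lemma is_word_simps [simp]:
  "is_word n []"
  "is_word n (i # w) \<longleftrightarrow> i \<in> {1..n} \<and> is_word n w"
  "is_word n (u @ v) \<longleftrightarrow> is_word n u \<and> is_word n v"
  "is_word n (rev w) \<longleftrightarrow> is_word n w"
  by (auto simp: is_word_def)

lemma coxeq_append_cong: "coxeq n k x y \<Longrightarrow> coxeq n k (u @ x @ v) (u @ y @ v)"
proof (induction arbitrary: u v rule: coxeq.induct)
  case (refl w) then show ?case by (rule coxeq.refl)
next
  case (sym a b) then show ?case by (blast intro: coxeq.sym)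
next
  case (trans a b c) then show ?case by (blast intro: coxeq.trans)
next
  case (rel r u' v')
  have "coxeq n k ((u @ u') @ r @ (v' @ v)) ((u @ u') @ (v' @ v))"
    using rel by (rule coxeq.rel)
  then show ?case by simp
qed

lemma coxeq_cancel_square:
  "i \<in> {1..n} \<Longrightarrow> coxeq n k (u @ [i, i] @ v) (u @ v)"
  by (rule coxeq.rel) (auto simp: relators_def)

lemma coxeq_cancel_braid:
  "a \<in> {1..n} \<Longrightarrow> b \<in> {1..n} \<Longrightarrow> a \<noteq> b
    \<Longrightarrow> coxeq n k (u @ concat (replicate k [a, b]) @ v) (u @ v)"
  by (rule coxeq.rel) (auto simp: relators_def)

lemma coxeq_append_rev: "is_word n w \<Longrightarrow> coxeq n k (w @ rev w) []"
proof (induction w)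
  case Nil then show ?case by (simp add: coxeq.refl)
next
  case (Cons i w)
  have "coxeq n k ([i] @ (w @ rev w) @ [i]) ([i] @ [] @ [i])"
    using Cons by (intro coxeq_append_cong) simp
  moreover have "coxeq n k ([] @ [i, i] @ []) ([] @ [])"
    using Cons.prems by (intro coxeq_cancel_square) simp
  ultimately show ?case by (auto intro: coxeq.trans)
qed

definition refl_prod :: "nat \<Rightarrow> nat \<Rightarrow> nat \<Rightarrow> nat list \<Rightarrow> bool" where
  "refl_prod n k m w \<longleftrightarrow>
     (\<exists>ts. length ts = m \<and> (\<forall>t\<in>set ts. refl_word n t) \<and> coxeq n k (concat ts) w)"

lemma lR_le_refl_prod: "refl_prod n k m w \<Longrightarrow> lR n k w \<le> m"
  unfolding lR_def refl_prod_def by (rule Least_le) blast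

lemma refl_prod_coxeq: "refl_prod n k m w \<Longrightarrow> coxeq n k w w' \<Longrightarrow> refl_prod n k m w'"
  unfolding refl_prod_def by (blast intro: coxeq.trans)

lemma refl_prod_Nil: "refl_prod n k 0 []"
  unfolding refl_prod_def by (auto intro: coxeq.refl)

lemma refl_prod_insert_letter:
  assumes u: "is_word n u" and i: "i \<in> {1..n}" and uv: "refl_prod n k m (u @ v)"
  shows "refl_prod n k (Suc m) (u @ [i] @ v)"
proof -
  obtain ts where ts: "length ts = m" "\<forall>t\<in>set ts. refl_word n t" "coxeq n k (concat ts) (u @ v)"
    using uv unfolding refl_prod_def by blast
  let ?t = "u @ [i] @ rev u"
  have "refl_word n ?t" using u i unfolding refl_word_def by blast
  moreover have "coxeq n k (?t @ concat ts @ []) (?t @ (u @ v) @ [])"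
    by (rule coxeq_append_cong[OF ts(3)])
  moreover have "coxeq n k ((u @ [i]) @ (rev u @ u) @ v) ((u @ [i]) @ [] @ v)"
    using coxeq_append_rev[of n "rev u" k] u by (intro coxeq_append_cong) simp
  ultimately show ?thesis
    unfolding refl_prod_def using ts
    by (intro exI[of _ "?t # ts"]) (auto intro: coxeq.trans)
qed

lemma refl_prod_insert_square:
  "i \<in> {1..n} \<Longrightarrow> refl_prod n k m (u @ v) \<Longrightarrow> refl_prod n k m (u @ [i, i] @ v)"
  by (blast intro: refl_prod_coxeq coxeq.sym coxeq_cancel_square)

lemma refl_prod_insert_braid:
  "a \<in> {1..n} \<Longrightarrow> b \<in> {1..n} \<Longrightarrow> a \<noteq> b \<Longrightarrow> refl_prod n k m (u @ v)
    \<Longrightarrow> refl_prod n k m (u @ concat (replicate k [a, b]) @ v)"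
  by (blast intro: refl_prod_coxeq coxeq.sym coxeq_cancel_braid)

definition cycle_word :: "nat \<Rightarrow> nat \<Rightarrow> nat \<Rightarrow> nat \<Rightarrow> nat list" where
  "cycle_word a b c m = concat (replicate m [a, b, c]) @ [a, b]"

lemma concat_replicate_append_commute:
  "concat (replicate m xs) @ xs = xs @ concat (replicate m xs)"
  by (induction m) auto

lemma concat_replicate_Suc_snoc: "concat (replicate (Suc m) xs) = concat (replicate m xs) @ xs"
  by (simp add: concat_replicate_append_commute)

lemma cycle_word_add: "cycle_word a b c (A + 1 + B) = cycle_word a b c A @ [c] @ cycle_word a b c B"
  by (simp add: cycle_word_def replicate_add flip: concat_replicate_Suc_snoc)

lemma cycle_word_Suc: "cycle_word a b c (Suc m) = [a, b, c] @ cycle_word a b c m"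
  by (simp add: cycle_word_def)

lemma cycle_word_Suc_snoc: "cycle_word a b c (Suc m) = cycle_word a b c m @ [c, a, b]"
  using concat_replicate_append_commute[of m "[a, b, c]"] by (simp add: cycle_word_def)

lemma concat_replicate_rotate:
  "a # concat (replicate m [b, c, a]) = concat (replicate m [a, b, c]) @ [a]"
  by (induction m) auto

lemma cycle_word_rotate: "cycle_word a b c (Suc m) = [a] @ cycle_word b c a m @ [a, b]"
proof -
  have "cycle_word a b c (Suc m) = (concat (replicate m [a, b, c]) @ [a]) @ [b, c, a, b]"
    unfolding cycle_word_def concat_replicate_Suc_snoc by simp
  also have "\<dots> = [a] @ cycle_word b c a m @ [a, b]"
    unfolding concat_replicate_rotate[symmetric] by (simp add: cycle_word_def)
  finally show ?thesis .
qed

lemma is_word_cycle_word [simp]: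
  "is_word n (cycle_word a b c m) \<longleftrightarrow> a \<in> {1..n} \<and> b \<in> {1..n} \<and> (m = 0 \<or> c \<in> {1..n})"
  by (cases m) (auto simp: cycle_word_def is_word_def)

lemma refl_prod_insert_letters:
  assumes letters: "a \<in> {1..n}" "b \<in> {1..n}" "c \<in> {1..n}" and u: "is_word n u"
  shows "refl_prod n k m0 (u @ concat (replicate (Suc j) [a, b]) @ v)
    \<Longrightarrow> refl_prod n k (m0 + j) (u @ cycle_word a b c j @ v)"
proof (induction j arbitrary: m0 v)
  case 0 then show ?case by (simp add: cycle_word_def)
next
  case (Suc j)
  have "refl_prod n k m0 (u @ concat (replicate (Suc j) [a, b]) @ ([a, b] @ v))"
    using Suc.prems by (simp only: concat_replicate_Suc_snoc append_assoc)
  then have "refl_prod n k (m0 + j) (u @ cycle_word a b c j @ ([a, b] @ v))"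
    by (rule Suc.IH)
  then have "refl_prod n k (Suc (m0 + j)) ((u @ cycle_word a b c j) @ [c] @ ([a, b] @ v))"
    using letters u by (intro refl_prod_insert_letter) auto
  then show ?case by (simp add: cycle_word_Suc_snoc)
qed

lemma refl_prod_cycle_word_blocks:
  assumes k: "2 \<le> k" and letters: "a \<in> {1..n}" "b \<in> {1..n}" "c \<in> {1..n}" "a \<noteq> b"
  shows "is_word n u \<Longrightarrow> refl_prod n k m0 (u @ v)
    \<Longrightarrow> refl_prod n k (m0 + Suc t * (k - 2) + 1) (u @ cycle_word a b c (Suc t * k - 1) @ v)"
proof (induction t arbitrary: m0 u v)
  case 0
  have "refl_prod n k m0 (u @ concat (replicate (Suc (k - 1)) [a, b]) @ v)"
    using refl_prod_insert_braid[OF letters(1,2,4) 0(2)] k by simp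
  then have "refl_prod n k (m0 + (k - 1)) (u @ cycle_word a b c (k - 1) @ v)"
    by (rule refl_prod_insert_letters[OF letters(1-3) 0(1)])
  moreover have "m0 + (k - 1) = m0 + Suc 0 * (k - 2) + 1" "Suc 0 * k - 1 = k - 1"
    using k by simp_all
  ultimately show ?case by metis
next
  case (Suc t)
  let ?ab = "concat (replicate (k - 1) [a, b])"
  have k_pred: "Suc (k - 2) = k - 1"
    using k by arith
  obtain j where "k = Suc (Suc j)"
    using k by (metis add_2_eq_Suc le_Suc_ex)
  then have "Suc (Suc t) * k - 1 = Suc (Suc t * k - 1) + 1 + (k - 2)"
    by simp
  then have blocks: "cycle_word a b c (Suc (Suc t) * k - 1)
      = [a, b, c] @ cycle_word a b c (Suc t * k - 1) @ [c] @ cycle_word a b c (k - 2)"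
    by (simp only: cycle_word_add cycle_word_Suc append_assoc)
  have "concat (replicate k [a, b]) = [a, b] @ ?ab"
    using k by (cases k) auto
  then have "refl_prod n k m0 (u @ [a, b] @ ?ab @ v)"
    using refl_prod_insert_braid[OF letters(1,2,4) Suc.prems(2)] by simp
  then have "refl_prod n k m0 ((u @ [a, b, c]) @ [c] @ ?ab @ v)"
    using refl_prod_insert_square[OF letters(3), of k m0 "u @ [a, b]"] by simp
  then have "refl_prod n k (m0 + Suc t * (k - 2) + 1)
      ((u @ [a, b, c]) @ cycle_word a b c (Suc t * k - 1) @ [c] @ ?ab @ v)"
    using Suc.prems(1) letters by (intro Suc.IH) auto
  then have "refl_prod n k (m0 + Suc t * (k - 2) + 1)
      ((u @ [a, b, c] @ cycle_word a b c (Suc t * k - 1) @ [c])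
        @ concat (replicate (Suc (k - 2)) [a, b]) @ v)"
    unfolding k_pred by simp
  moreover have "is_word n (u @ [a, b, c] @ cycle_word a b c (Suc t * k - 1) @ [c])"
    using Suc.prems(1) letters by simp
  ultimately have "refl_prod n k (m0 + Suc t * (k - 2) + 1 + (k - 2))
      ((u @ [a, b, c] @ cycle_word a b c (Suc t * k - 1) @ [c]) @ cycle_word a b c (k - 2) @ v)"
    using refl_prod_insert_letters[OF letters(1-3)] by blast
  moreover have "m0 + Suc t * (k - 2) + 1 + (k - 2) = m0 + Suc (Suc t) * (k - 2) + 1"
    by simp
  ultimately show ?case
    unfolding blocks by (metis append_assoc)
qed

(* Of the m + 1 periods a b of cycle_word a b c m, each full block of k periods costs
   k - 2 reflections, each remaining period one, plus one reflection overall. *)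
definition cycle_word_cost :: "nat \<Rightarrow> nat \<Rightarrow> nat" where
  "cycle_word_cost k m = (m + 1) div k * (k - 2) + 1 + (m + 1) mod k"

lemma cycle_word_cost_eq: "2 \<le> k \<Longrightarrow> cycle_word_cost k m + 2 * ((m + 1) div k) = m + 2"
proof -
  assume k: "2 \<le> k"
  define q where "q = (m + 1) div k"
  have "q * (k - 2) + 2 * q = q * k"
    using k by (metis add_mult_distrib2 le_add_diff_inverse2 mult.commute)
  moreover have "q * k + (m + 1) mod k = m + 1"
    unfolding q_def by (rule div_mult_mod_eq)
  ultimately show ?thesis
    unfolding cycle_word_cost_def q_def[symmetric] by linarith
qed

lemma cycle_word_cost_Suc:
  assumes "(m + 2) mod k \<noteq> 0"
  shows "cycle_word_cost k (Suc m) = Suc (cycle_word_cost k m)"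
proof -
  have "Suc (m + 1) div k = (m + 1) div k" "Suc (m + 1) mod k = Suc ((m + 1) mod k)"
    using assms by (auto simp: div_Suc mod_Suc split: if_splits)
  then show ?thesis
    by (simp add: cycle_word_cost_def)
qed

lemma refl_prod_cycle_word:
  assumes k: "2 \<le> k"
  shows "a \<in> {1..n} \<Longrightarrow> b \<in> {1..n} \<Longrightarrow> c \<in> {1..n} \<Longrightarrow> a \<noteq> b \<Longrightarrow> b \<noteq> c \<Longrightarrow> c \<noteq> a
    \<Longrightarrow> is_word n u \<Longrightarrow> refl_prod n k m0 (u @ v)
    \<Longrightarrow> refl_prod n k (m0 + cycle_word_cost k m) (u @ cycle_word a b c m @ v)"
proof (induction m arbitrary: a b c u v m0)
  case 0
  have "refl_prod n k (Suc m0) (u @ [b] @ v)"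
    using 0 by (intro refl_prod_insert_letter) auto
  then have "refl_prod n k (Suc (Suc m0)) (u @ [a] @ [b] @ v)"
    using 0 by (intro refl_prod_insert_letter) auto
  moreover have "cycle_word_cost k 0 = 2"
    using k by (simp add: cycle_word_cost_def)
  ultimately show ?case
    by (simp add: cycle_word_def)
next
  case (Suc m)
  show ?case
  proof (cases "(Suc m + 1) mod k = 0")
    case True
    define q where "q = (Suc m + 1) div k"
    have qk: "q * k = Suc m + 1"
      using True div_mult_mod_eq[of "Suc m + 1" k] unfolding q_def by simp
    then obtain t where q: "q = Suc t"
      by (cases q) auto
    have "refl_prod n k (m0 + Suc t * (k - 2) + 1) (u @ cycle_word a b c (Suc t * k - 1) @ v)"
      using Suc.prems by (intro refl_prod_cycle_word_blocks[OF k]) auto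
    moreover have "cycle_word_cost k (Suc m) = Suc t * (k - 2) + 1"
      unfolding cycle_word_cost_def q_def[symmetric] q using True by simp
    moreover have "Suc t * k - 1 = Suc m"
      using qk q by simp
    ultimately show ?thesis
      by (metis add.assoc)
  next
    case False
    then have cost: "cycle_word_cost k (Suc m) = Suc (cycle_word_cost k m)"
      by (intro cycle_word_cost_Suc) simp
    have "refl_prod n k m0 ((u @ [a]) @ [a] @ v)"
      using refl_prod_insert_square[of a n k m0 u v] Suc.prems by simp
    then have "refl_prod n k (m0 + cycle_word_cost k m) ((u @ [a]) @ cycle_word b c a m @ [a] @ v)"
      using Suc.prems by (intro Suc.IH) auto
    then have "refl_prod n k (Suc (m0 + cycle_word_cost k m)) ((u @ [a] @ cycle_word b c a m @ [a]) @ [b] @ v)"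
      using Suc.prems by (intro refl_prod_insert_letter) auto
    then show ?thesis
      using cost by (simp add: cycle_word_rotate)
  qed
qed

lemma lR_cycle_word:
  assumes "2 \<le> k" "a \<in> {1..n}" "b \<in> {1..n}" "c \<in> {1..n}" "a \<noteq> b" "b \<noteq> c" "c \<noteq> a"
  shows "lR n k (cycle_word a b c m) + 2 * ((m + 1) div k) \<le> m + 2"
proof -
  have "refl_prod n k (0 + cycle_word_cost k m) ([] @ cycle_word a b c m @ [])"
    using assms refl_prod_Nil by (intro refl_prod_cycle_word) auto
  then show ?thesis
    using cycle_word_cost_eq[OF assms(1), of m] lR_le_refl_prod by fastforce
qed

lemma lR_cycle_word_snoc:
  assumes "2 \<le> k" "a \<in> {1..n}" "b \<in> {1..n}" "c \<in> {1..n}" "a \<noteq> b" "b \<noteq> c" "c \<noteq> a"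
  shows "lR n k (cycle_word a b c m @ [c]) + 2 * ((m + 1) div k) \<le> m + 3"
proof -
  have "refl_prod n k (0 + cycle_word_cost k m) ([] @ cycle_word a b c m @ [])"
    using assms refl_prod_Nil by (intro refl_prod_cycle_word) auto
  then have "refl_prod n k (Suc (cycle_word_cost k m)) (cycle_word a b c m @ [c] @ [])"
    using assms by (intro refl_prod_insert_letter) auto
  then show ?thesis
    using cycle_word_cost_eq[OF assms(1), of m] lR_le_refl_prod by fastforce
qed

lemma lR_cycle_power_snoc:
  assumes "2 \<le> k" "a \<in> {1..n}" "b \<in> {1..n}" "c \<in> {1..n}" "a \<noteq> b" "b \<noteq> c" "c \<noteq> a"
  shows "lR n k (concat (replicate m [a, b, c]) @ [a]) + 2 * (m div k) \<le> m + 1"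
proof (cases m)
  case 0
  have "refl_prod n k (Suc 0) ([] @ [a] @ [])"
    using assms refl_prod_Nil by (intro refl_prod_insert_letter) auto
  then show ?thesis
    using 0 lR_le_refl_prod by fastforce
next
  case (Suc l)
  have "refl_prod n k 0 ([a] @ [a])"
    using assms refl_prod_insert_square[of a n k 0 "[]" "[]"] refl_prod_Nil by simp
  then have "refl_prod n k (0 + cycle_word_cost k l) ([a] @ cycle_word b c a l @ [a])"
    using assms by (intro refl_prod_cycle_word) auto
  moreover have "[a] @ cycle_word b c a l @ [a] = concat (replicate m [a, b, c]) @ [a]"
    using Suc by (simp add: cycle_word_def concat_replicate_rotate)
  ultimately show ?thesis
    using Suc cycle_word_cost_eq[OF assms(1), of l] lR_le_refl_prod by fastforce
qed

lemma lR_cycle_power_prefix: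
  assumes k: "2 \<le> k" and "1 \<le> r" "r \<le> 3"
  shows "lR 3 k (concat (replicate lam [1, 2, 3]) @ [1..<r + 1])
           + 2 * ((lam + (if r \<ge> 2 then 1 else 0)) div k) \<le> lam + r"
proof -
  consider "r = 1" | "r = 2" | "r = 3"
    using assms(2,3) by linarith
  then show ?thesis
  proof cases
    case 1
    have "lR 3 k (concat (replicate lam [1, 2, 3]) @ [1]) + 2 * (lam div k) \<le> lam + 1"
      using k by (intro lR_cycle_power_snoc) auto
    then show ?thesis
      using 1 by simp
  next
    case 2
    have "lR 3 k (cycle_word 1 2 3 lam) + 2 * ((lam + 1) div k) \<le> lam + 2"
      using k by (intro lR_cycle_word) auto
    moreover have "[1..<2 + 1] = [1, 2::nat]"
      by (simp add: eval_nat_numeral upt_rec)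
    ultimately show ?thesis
      unfolding 2 by (simp add: cycle_word_def)
  next
    case 3
    have "lR 3 k (cycle_word 1 2 3 lam @ [3]) + 2 * ((lam + 1) div k) \<le> lam + 3"
      using k by (intro lR_cycle_word_snoc) auto
    moreover have "[1..<3 + 1] = [1, 2, 3::nat]"
      by (simp add: eval_nat_numeral upt_rec)
    ultimately show ?thesis
      unfolding 3 by (simp add: cycle_word_def)
  qed
qed

theorem mainTheorem13:
  fixes k lam r :: nat
  assumes "k \<ge> 3" and "1 \<le> r" and "r \<le> 3"
  shows "int (lR 3 k (concat (replicate lam [1, 2, 3]) @ [1..<r + 1]))
           \<le> int lam + int r
              - 2 * ((int lam + (if r \<ge> 2 then 1 else 0)) div int k)"
proof -
  have "lR 3 k (concat (replicate lam [1, 2, 3]) @ [1..<r + 1])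
          + 2 * ((lam + (if r \<ge> 2 then 1 else 0)) div k) \<le> lam + r"
    using assms by (intro lR_cycle_power_prefix) auto
  moreover have "(int lam + (if r \<ge> 2 then 1 else 0)) div int k
      = int ((lam + (if r \<ge> 2 then 1 else 0)) div k)"
    by (simp add: zdiv_int)
  ultimately show ?thesis
    by linarith
qed

end
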